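(* Let $\pi\colon E\to B$ and $\pi'\colon E'\to B'$ be Hurewicz fibrations with path-connected bases $B$ and $B'$. Let $f,g\colon E\to E'$ and $\bar f,\bar g\colon B\to B'$ be continuous maps with $\pi'\circ f=\bar f\circ\pi$ and $\pi'\circ g=\bar g\circ\pi$. Let $b_0\in B$ satisfy $\bar f(b_0)=b_0'=\bar g(b_0)$, let $F_0=\pi^{-1}(b_0)$, $F_0'=\pi'^{-1}(b_0')$, and let $f_0,g_0\colon F_0\to F_0'$ be the maps induced by $f$ and $g$. Then $$\mathrm{D}(f,g)+1\leq \big(\mathrm{D}(f_0,g_0)+1\big)\big(\mathrm{cat}(B)+1\big).$$
   Context: For continuous maps $f,g\colon X\to Y$, the homotopic distance $\mathrm{D}(f,g)$ is the least integer $n\geq 0$ such that there is an open cover $\{U_0,\dots,U_n\}$ of $X$ with $f|_{U_j}\simeq g|_{U_j}$ for all $j$ ($\infty$ if none exists). For a path-connected space $B$, $\mathrm{cat}(B)$ is the least integer $n\geq 0$ such that $B$ can be covered by $n+1$ open sets whose inclusions into $B$ are null-homotopic. *)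

theory Defs
  imports "HOL-Analysis.Analysis" "HOL-Library.Extended_Nat"
begin

text \<open>Homotopy lifting property of p : E \<rightarrow> B with respect to all test spaces
  whose points have type 'x (the test type is selected by the itself argument).\<close>
definition hlp_wrt :: "'x itself \<Rightarrow> 'e topology \<Rightarrow> 'b topology \<Rightarrow> ('e \<Rightarrow> 'b) \<Rightarrow> bool" where
  "hlp_wrt T E B p \<longleftrightarrow>
     (\<forall>(X::'x topology) h H.
        continuous_map X E h \<and>
        continuous_map (prod_topology X (top_of_set {0..1::real})) B H \<and>
        (\<forall>x\<in>topspace X. H (x, 0) = p (h x))
        \<longrightarrow> (\<exists>K. continuous_map (prod_topology X (top_of_set {0..1::real})) E K \<and>
                 (\<forall>x\<in>topspace X. K (x, 0) = h x) \<and>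
                 (\<forall>z\<in>topspace (prod_topology X (top_of_set {0..1::real})). p (K z) = H z)))"

definition hurewicz_fibration :: "'x itself \<Rightarrow> 'e topology \<Rightarrow> 'b topology \<Rightarrow> ('e \<Rightarrow> 'b) \<Rightarrow> bool" where
  "hurewicz_fibration T E B p \<longleftrightarrow> continuous_map E B p \<and> hlp_wrt T E B p"

text \<open>Homotopic distance D(f,g), with value \<infinity> if no finite open cover exists.\<close>
definition homotopic_distance :: "'a topology \<Rightarrow> 'b topology \<Rightarrow> ('a \<Rightarrow> 'b) \<Rightarrow> ('a \<Rightarrow> 'b) \<Rightarrow> enat" where
  "homotopic_distance X Y f g =
     (INF n \<in> {n::nat. \<exists>U::nat \<Rightarrow> 'a set.
         (\<forall>j\<le>n. openin X (U j)) \<and> (\<Union>j\<le>n. U j) = topspace X \<and>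
         (\<forall>j\<le>n. homotopic_with (\<lambda>_. True) (subtopology X (U j)) Y f g)}. enat n)"

text \<open>Lusternik--Schnirelmann category (normalized), \<infinity> if no finite cover exists.\<close>
definition ls_cat :: "'a topology \<Rightarrow> enat" where
  "ls_cat B =
     (INF n \<in> {n::nat. \<exists>U::nat \<Rightarrow> 'a set.
         (\<forall>j\<le>n. openin B (U j)) \<and> (\<Union>j\<le>n. U j) = topspace B \<and>
         (\<forall>j\<le>n. \<exists>c\<in>topspace B. homotopic_with (\<lambda>_. True) (subtopology B (U j)) B id (\<lambda>_. c))}. enat n)"

end

theory Submission
  imports Defs
begin

text \<open>Cover \<open>B\<close> by \<open>m + 1 = cat(B) + 1\<close> open sets \<open>U\<^sub>j\<close> with null-homotopic inclusions. As \<open>B\<close> is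
  path-connected the null-homotopies may end at \<open>b\<^sub>0\<close>, and lifting them through \<open>p\<close> deforms
  \<open>p\<^sup>-\<^sup>1(U\<^sub>j)\<close> inside \<open>E\<close> into the fibre \<open>F\<^sub>0\<close> by some \<open>\<phi>\<^sub>j\<close>. If \<open>V\<^sub>0, \<dots>, V\<^sub>n\<close> cover \<open>F\<^sub>0\<close> with
  \<open>f \<simeq> g\<close> on each \<open>V\<^sub>i\<close>, then \<open>f \<simeq> f \<circ> \<phi>\<^sub>j \<simeq> g \<circ> \<phi>\<^sub>j \<simeq> g\<close> on each of the \<open>(n + 1)(m + 1)\<close> open sets
  \<open>p\<^sup>-\<^sup>1(U\<^sub>j) \<inter> \<phi>\<^sub>j\<^sup>-\<^sup>1(V\<^sub>i)\<close>. Only the lifting property of \<open>p\<close> is used: the hypotheses on \<open>p'\<close>,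
  \<open>fb\<close> and \<open>gb\<close> just make \<open>f\<close> and \<open>g\<close> map \<open>F\<^sub>0\<close> into \<open>F\<^sub>0'\<close>, which any finite cover
  witnessing \<open>D(f\<^sub>0, g\<^sub>0)\<close> forces anyway.\<close>

lemma INF_enat_eq_enatD:
  assumes "(INF n\<in>S. enat n) = enat k"
  shows "k \<in> S"
proof -
  have ne: "S \<noteq> {}"
    using assms by (auto simp: top_enat_def)
  have "(INF n\<in>S. enat n) = enat (LEAST n. n \<in> S)"
  proof (rule antisym)
    show "(INF n\<in>S. enat n) \<le> enat (LEAST n. n \<in> S)"
      using ne by (intro INF_lower) (auto intro: LeastI)
    show "enat (LEAST n. n \<in> S) \<le> (INF n\<in>S. enat n)"
      by (intro INF_greatest) (auto intro: Least_le)
  qed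
  then show ?thesis
    using assms ne by (auto intro: LeastI)
qed

lemma homotopic_distance_le_finite_cover:
  assumes "finite I" "I \<noteq> {}"
    and openW: "\<And>i. i \<in> I \<Longrightarrow> openin X (W i)"
    and coverW: "(\<Union>i\<in>I. W i) = topspace X"
    and homW: "\<And>i. i \<in> I \<Longrightarrow> homotopic_with (\<lambda>_. True) (subtopology X (W i)) Y f g"
  shows "homotopic_distance X Y f g + 1 \<le> enat (card I)"
proof -
  obtain h where h: "bij_betw h {0..<card I} I"
    using ex_bij_betw_nat_finite[OF \<open>finite I\<close>] by blast
  define N where "N = card I - 1"
  have card_I: "card I = Suc N"
    using assms(1,2) by (simp add: N_def card_gt_0_iff)
  have hN: "h ` {..N} = I"
    using h card_I by (simp add: bij_betw_def atLeast0LessThan lessThan_Suc_atMost)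
  have "homotopic_distance X Y f g \<le> enat N"
    unfolding homotopic_distance_def
  proof (rule INF_lower, intro CollectI exI[of _ "W \<circ> h"] conjI allI impI)
    show "openin X ((W \<circ> h) j)" if "j \<le> N" for j
      using openW hN that by auto
    show "(\<Union>j\<le>N. (W \<circ> h) j) = topspace X"
    proof -
      have "(\<Union>j\<le>N. (W \<circ> h) j) = (\<Union>i\<in>h ` {..N}. W i)"
        by simp
      then show ?thesis
        using coverW hN by simp
    qed
    show "homotopic_with (\<lambda>_. True) (subtopology X ((W \<circ> h) j)) Y f g" if "j \<le> N" for j
      using homW hN that by auto
  qed
  then show ?thesis
    using card_I by (simp add: eSuc_enat[symmetric] eSuc_plus_1[symmetric])
qed

lemma hlp_wrt_prod_imp_hlp_wrt:
  assumes hlp: "hlp_wrt TYPE('x \<times> 'y) E B p"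
  shows "hlp_wrt TYPE('x) E B p"
  unfolding hlp_wrt_def
proof (intro allI impI, elim conjE)
  fix X :: "'x topology" and h H
  assume h: "continuous_map X E h"
    and H: "continuous_map (prod_topology X (top_of_set {0..1::real})) B H"
    and H0: "\<forall>x\<in>topspace X. H (x, 0) = p (h x)"
  let ?I = "top_of_set {0..1::real}"
  define c :: 'y where "c = undefined"
  define X' where "X' = prod_topology X (discrete_topology {c})"
  have pr: "continuous_map (prod_topology X' ?I) (prod_topology X ?I) (\<lambda>z. (fst (fst z), snd z))"
    unfolding X'_def
    by (intro continuous_map_pairedI continuous_map_snd
        continuous_map_compose[OF continuous_map_fst continuous_map_fst, unfolded o_def])
  have "continuous_map X' E (h \<circ> fst)"
    unfolding X'_def using h continuous_map_fst continuous_map_compose by blast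
  moreover have "continuous_map (prod_topology X' ?I) B (\<lambda>z. H (fst (fst z), snd z))"
    using continuous_map_compose[OF pr H] by (simp add: o_def)
  moreover have "\<forall>x\<in>topspace X'. H (fst x, 0) = p ((h \<circ> fst) x)"
    using H0 by (auto simp: X'_def)
  ultimately obtain K' where K': "continuous_map (prod_topology X' ?I) E K'"
    and K'0: "\<forall>x\<in>topspace X'. K' (x, 0) = h (fst x)"
    and pK': "\<forall>z\<in>topspace (prod_topology X' ?I). p (K' z) = H (fst (fst z), snd z)"
    using hlp[unfolded hlp_wrt_def, rule_format, of X' "h \<circ> fst" "\<lambda>z. H (fst (fst z), snd z)"] by auto
  have emb: "continuous_map (prod_topology X ?I) (prod_topology X' ?I) (\<lambda>z. ((fst z, c), snd z))"
    unfolding X'_def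
    by (intro continuous_map_pairedI continuous_map_fst continuous_map_snd
        continuous_map_const[THEN iffD2]) auto
  show "\<exists>K. continuous_map (prod_topology X ?I) E K \<and> (\<forall>x\<in>topspace X. K (x, 0) = h x) \<and>
            (\<forall>z\<in>topspace (prod_topology X ?I). p (K z) = H z)"
  proof (intro exI conjI)
    show "continuous_map (prod_topology X ?I) E (\<lambda>z. K' ((fst z, c), snd z))"
      using continuous_map_compose[OF emb K'] by (simp add: o_def)
    show "\<forall>x\<in>topspace X. K' ((fst (x, 0::real), c), snd (x, 0::real)) = h x"
      using K'0 by (auto simp: X'_def)
    show "\<forall>z\<in>topspace (prod_topology X ?I). p (K' ((fst z, c), snd z)) = H z"
      using pK' by (auto simp: X'_def)
  qed
qed

lemma hlp_deformation_into_fibre: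
  fixes E :: "'e topology" and B :: "'b topology"
  assumes hlp: "hlp_wrt TYPE('e) E B p" and p: "continuous_map E B p"
    and contractible: "homotopic_with (\<lambda>_. True) (subtopology B U) B id (\<lambda>_. b)"
  obtains \<phi> where
    "continuous_map (subtopology E {x \<in> topspace E. p x \<in> U}) (subtopology E {x \<in> topspace E. p x = b}) \<phi>"
    "homotopic_with (\<lambda>_. True) (subtopology E {x \<in> topspace E. p x \<in> U}) E id \<phi>"
proof -
  let ?EU = "subtopology E {x \<in> topspace E. p x \<in> U}"
  let ?I = "top_of_set {0..1::real}"
  obtain G where G: "continuous_map (prod_topology ?I (subtopology B U)) B G"
    and G0: "\<And>y. G (0, y) = y" and G1: "\<And>y. G (1, y) = b"
    using contractible unfolding homotopic_with_def by auto
  have pU: "continuous_map ?EU (subtopology B U) p"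
    by (auto simp: continuous_map_in_subtopology intro!: continuous_map_from_subtopology p)
  have "continuous_map (prod_topology ?EU ?I) (prod_topology ?I (subtopology B U)) (\<lambda>z. (snd z, p (fst z)))"
    by (intro continuous_map_pairedI continuous_map_snd
        continuous_map_compose[OF continuous_map_fst pU, unfolded o_def])
  then have "continuous_map (prod_topology ?EU ?I) B (\<lambda>z. G (snd z, p (fst z)))"
    using continuous_map_compose[OF _ G] by (simp add: o_def)
  then obtain K where K: "continuous_map (prod_topology ?EU ?I) E K"
    and K0: "\<forall>x\<in>topspace ?EU. K (x, 0) = x"
    and pK: "\<forall>z\<in>topspace (prod_topology ?EU ?I). p (K z) = G (snd z, p (fst z))"
    using hlp[unfolded hlp_wrt_def, rule_format, of ?EU id "\<lambda>z. G (snd z, p (fst z))"] G0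
    by (auto simp: continuous_map_from_subtopology)
  have "continuous_map ?EU (prod_topology ?EU ?I) (\<lambda>x. (x, 1))"
    by (intro continuous_map_pairedI continuous_map_id[unfolded id_def]
        continuous_map_const[THEN iffD2]) auto
  then have K1: "continuous_map ?EU E (\<lambda>x. K (x, 1))"
    using continuous_map_compose[OF _ K] by (simp add: o_def)
  show thesis
  proof
    show "continuous_map ?EU (subtopology E {x \<in> topspace E. p x = b}) (\<lambda>x. K (x, 1))"
    proof -
      have "(\<lambda>x. K (x, 1)) ` topspace ?EU \<subseteq> {x \<in> topspace E. p x = b}"
        using continuous_map_image_subset_topspace[OF K1] pK G1 by auto
      then show ?thesis
        using K1 by (simp add: continuous_map_in_subtopology image_subset_iff_funcset)
    qed
    have "continuous_map (prod_topology ?I ?EU) E (\<lambda>z. K (snd z, fst z))"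
      using continuous_map_compose[OF continuous_map_pairedI[OF continuous_map_snd continuous_map_fst] K]
      by (simp add: o_def)
    \<comment> \<open>\<open>homotopic_with\<close> demands \<open>k (0, x) = x\<close> for all \<open>x\<close>, not only on the topspace\<close>
    then have "continuous_map (prod_topology ?I ?EU) E (\<lambda>(t, x). if t = 0 then x else K (x, t))"
      by (rule continuous_map_eq) (use K0 in auto)
    then show "homotopic_with (\<lambda>_. True) ?EU E id (\<lambda>x. K (x, 1))"
      unfolding homotopic_with_def by (intro exI[of _ "\<lambda>(t, x). if t = 0 then x else K (x, t)"]) auto
  qed
qed

lemma homotopic_with_on_preimage_of_deformation:
  assumes f: "continuous_map E E' f" and g: "continuous_map E E' g"
    and \<phi>: "continuous_map (subtopology E W) (subtopology E F) \<phi>"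
    and id_\<phi>: "homotopic_with (\<lambda>_. True) (subtopology E W) E id \<phi>"
    and fg: "homotopic_with (\<lambda>_. True) (subtopology (subtopology E F) V) (subtopology E' F') f g"
  shows "homotopic_with (\<lambda>_. True) (subtopology E {x \<in> W. \<phi> x \<in> V}) E' f g"
proof -
  let ?X = "subtopology E {x \<in> W. \<phi> x \<in> V}"
  note homotopic_with_trans[trans]
  have incl: "continuous_map ?X (subtopology E W) id"
    by (simp add: continuous_map_in_subtopology continuous_map_from_subtopology_mono[of E W])
  have id_\<phi>X: "homotopic_with (\<lambda>_. True) ?X E id \<phi>"
    using homotopic_with_compose_continuous_map_right[OF id_\<phi> incl] by (simp add: o_def id_def)
  have "homotopic_with (\<lambda>_. True) ?X E' f (f \<circ> \<phi>)"
    using homotopic_with_compose_continuous_map_left[OF id_\<phi>X f] by simp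
  also have "homotopic_with (\<lambda>_. True) ?X E' (f \<circ> \<phi>) (g \<circ> \<phi>)"
  proof -
    have "continuous_map ?X (subtopology (subtopology E F) V) \<phi>"
      using continuous_map_from_subtopology_mono[OF \<phi>, of "{x \<in> W. \<phi> x \<in> V}"]
      by (auto simp: continuous_map_in_subtopology)
    from homotopic_with_compose_continuous_map_right[OF fg this]
    have "homotopic_with (\<lambda>_. True) ?X (subtopology E' F') (f \<circ> \<phi>) (g \<circ> \<phi>)"
      by simp
    from homotopic_with_compose_continuous_map_left[OF this continuous_map_id_subt]
    show ?thesis
      by simp
  qed
  also have "homotopic_with (\<lambda>_. True) ?X E' (g \<circ> \<phi>) g"
    using homotopic_with_compose_continuous_map_left[OF id_\<phi>X g, THEN homotopic_with_symD] by simp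
  finally show ?thesis .
qed

lemma hlp_fibre_deformation_cover:
  fixes E :: "'e topology" and B :: "'b topology"
  assumes hlp: "hlp_wrt TYPE('e) E B p" and p: "continuous_map E B p"
    and B: "path_connected_space B" and b: "b \<in> topspace B"
    and cat: "ls_cat B = enat m"
  obtains A \<Phi> where "\<And>j. j \<le> m \<Longrightarrow> openin E (A j)" "(\<Union>j\<le>m. A j) = topspace E"
    "\<And>j. j \<le> m \<Longrightarrow>
       continuous_map (subtopology E (A j)) (subtopology E {x \<in> topspace E. p x = b}) (\<Phi> j)"
    "\<And>j. j \<le> m \<Longrightarrow> homotopic_with (\<lambda>_. True) (subtopology E (A j)) E id (\<Phi> j)"
proof -
  obtain U where openU: "\<forall>j\<le>m. openin B (U j)" and coverU: "(\<Union>j\<le>m. U j) = topspace B"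
    and contrU: "\<forall>j\<le>m. \<exists>c\<in>topspace B. homotopic_with (\<lambda>_. True) (subtopology B (U j)) B id (\<lambda>_. c)"
    using INF_enat_eq_enatD[OF cat[unfolded ls_cat_def]] by blast
  let ?A = "\<lambda>j. {x \<in> topspace E. p x \<in> U j}"
  have "\<exists>\<phi>. continuous_map (subtopology E (?A j)) (subtopology E {x \<in> topspace E. p x = b}) \<phi> \<and>
           homotopic_with (\<lambda>_. True) (subtopology E (?A j)) E id \<phi>" if j: "j \<le> m" for j
  proof -
    obtain c where "c \<in> topspace B" and id_c: "homotopic_with (\<lambda>_. True) (subtopology B (U j)) B id (\<lambda>_. c)"
      using contrU j by blast
    with B b have "homotopic_with (\<lambda>_. True) (subtopology B (U j)) B (\<lambda>_. c) (\<lambda>_. b)"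
      by (simp add: homotopic_constant_maps path_connected_space_iff_path_component)
    with id_c have "homotopic_with (\<lambda>_. True) (subtopology B (U j)) B id (\<lambda>_. b)"
      by (rule homotopic_with_trans)
    then obtain \<phi> where
      "continuous_map (subtopology E (?A j)) (subtopology E {x \<in> topspace E. p x = b}) \<phi>"
      "homotopic_with (\<lambda>_. True) (subtopology E (?A j)) E id \<phi>"
      by (rule hlp_deformation_into_fibre[OF hlp p])
    then show ?thesis
      by blast
  qed
  then have "\<forall>j\<in>{..m}. \<exists>\<phi>.
      continuous_map (subtopology E (?A j)) (subtopology E {x \<in> topspace E. p x = b}) \<phi> \<and>
      homotopic_with (\<lambda>_. True) (subtopology E (?A j)) E id \<phi>"
    by simp
  then obtain \<Phi> where \<Phi>: "\<forall>j\<in>{..m}.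
      continuous_map (subtopology E (?A j)) (subtopology E {x \<in> topspace E. p x = b}) (\<Phi> j) \<and>
      homotopic_with (\<lambda>_. True) (subtopology E (?A j)) E id (\<Phi> j)"
    by (rule bchoice[THEN exE])
  show thesis
  proof (rule that[of ?A \<Phi>])
    show "openin E (?A j)" if "j \<le> m" for j
      using openin_continuous_map_preimage[OF p] openU that by blast
    show "(\<Union>j\<le>m. ?A j) = topspace E"
    proof
      show "topspace E \<subseteq> (\<Union>j\<le>m. ?A j)"
        using coverU continuous_map_image_subset_topspace[OF p] by fastforce
    qed auto
    show "continuous_map (subtopology E (?A j)) (subtopology E {x \<in> topspace E. p x = b}) (\<Phi> j)"
      if "j \<le> m" for j
      using \<Phi> that by simp
    show "homotopic_with (\<lambda>_. True) (subtopology E (?A j)) E id (\<Phi> j)" if "j \<le> m" for j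
      using \<Phi> that by simp
  qed
qed

lemma homotopic_distance_le_deformation_cover:
  assumes f: "continuous_map E E' f" and g: "continuous_map E E' g"
    and openA: "\<And>j. j \<le> m \<Longrightarrow> openin E (A j)" and coverA: "(\<Union>j\<le>m. A j) = topspace E"
    and \<Phi>: "\<And>j. j \<le> m \<Longrightarrow> continuous_map (subtopology E (A j)) (subtopology E F) (\<Phi> j)"
    and id_\<Phi>: "\<And>j. j \<le> m \<Longrightarrow> homotopic_with (\<lambda>_. True) (subtopology E (A j)) E id (\<Phi> j)"
  shows "homotopic_distance E E' f g + 1 \<le>
           (homotopic_distance (subtopology E F) (subtopology E' F') f g + 1) * (enat m + 1)"
proof (cases "homotopic_distance (subtopology E F) (subtopology E' F') f g")
  case (enat n)
  obtain V where openV: "\<forall>i\<le>n. openin (subtopology E F) (V i)"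
    and coverV: "(\<Union>i\<le>n. V i) = topspace (subtopology E F)"
    and homV: "\<forall>i\<le>n. homotopic_with (\<lambda>_. True) (subtopology (subtopology E F) (V i)) (subtopology E' F') f g"
    using INF_enat_eq_enatD[OF enat[unfolded homotopic_distance_def]] by blast
  define W where "W = (\<lambda>(i, j). {x \<in> A j. \<Phi> j x \<in> V i})"
  have "homotopic_distance E E' f g + 1 \<le> enat (card ({..n} \<times> {..m}))"
  proof (rule homotopic_distance_le_finite_cover)
    show "openin E (W k)" if "k \<in> {..n} \<times> {..m}" for k
    proof -
      obtain i j where k: "k = (i, j)" and i: "i \<le> n" and j: "j \<le> m"
        using \<open>k \<in> {..n} \<times> {..m}\<close> by auto
      have "openin (subtopology E (A j)) {x \<in> topspace (subtopology E (A j)). \<Phi> j x \<in> V i}"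
        using openin_continuous_map_preimage[OF \<Phi>[OF j]] openV i by blast
      moreover have "{x \<in> topspace (subtopology E (A j)). \<Phi> j x \<in> V i} = W k"
        using openin_subset[OF openA[OF j]] by (auto simp: W_def k)
      ultimately show ?thesis
        using openin_trans_full openA[OF j] by metis
    qed
    show "(\<Union>k\<in>{..n} \<times> {..m}. W k) = topspace E"
    proof
      show "(\<Union>k\<in>{..n} \<times> {..m}. W k) \<subseteq> topspace E"
        using coverA by (auto simp: W_def)
      show "topspace E \<subseteq> (\<Union>k\<in>{..n} \<times> {..m}. W k)"
      proof
        fix x
        assume "x \<in> topspace E"
        then obtain j where j: "j \<le> m" and "x \<in> A j"
          using coverA by auto
        then have "\<Phi> j x \<in> topspace (subtopology E F)"
          using continuous_map_image_subset_topspace[OF \<Phi>[OF j]] \<open>x \<in> topspace E\<close> by auto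
        then obtain i where "i \<le> n" and "\<Phi> j x \<in> V i"
          using coverV by auto
        with j \<open>x \<in> A j\<close> show "x \<in> (\<Union>k\<in>{..n} \<times> {..m}. W k)"
          by (auto simp: W_def)
      qed
    qed
    show "homotopic_with (\<lambda>_. True) (subtopology E (W k)) E' f g" if "k \<in> {..n} \<times> {..m}" for k
      using that homotopic_with_on_preimage_of_deformation[OF f g \<Phi> id_\<Phi> homV[rule_format]]
      by (auto simp: W_def)
  qed simp_all
  also have "\<dots> = (homotopic_distance (subtopology E F) (subtopology E' F') f g + 1) * (enat m + 1)"
    using enat by (simp add: one_enat_def)
  finally show ?thesis .
next
  case infinity
  then show ?thesis
    by (simp add: plus_1_eSuc eSuc_enat)
qed

theorem theorem6p1:
  fixes E :: "'e topology" and B :: "'b topology" and E' :: "'f topology" and B' :: "'c topology"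
    and p :: "'e \<Rightarrow> 'b" and p' :: "'f \<Rightarrow> 'c"
    and f g :: "'e \<Rightarrow> 'f" and fb gb :: "'b \<Rightarrow> 'c" and b0 :: 'b and b0' :: 'c
  assumes "hurewicz_fibration TYPE('e \<times> real) E B p"
    and "hurewicz_fibration TYPE('e \<times> real) E' B' p'"
    and "path_connected_space B" and "path_connected_space B'"
    and "continuous_map E E' f" and "continuous_map E E' g"
    and "continuous_map B B' fb" and "continuous_map B B' gb"
    and "\<forall>x\<in>topspace E. p' (f x) = fb (p x)"
    and "\<forall>x\<in>topspace E. p' (g x) = gb (p x)"
    and "b0 \<in> topspace B" and "fb b0 = b0'" and "gb b0 = b0'"
  shows "homotopic_distance E E' f g + 1 \<le>
           (homotopic_distance (subtopology E {x \<in> topspace E. p x = b0})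
                               (subtopology E' {y \<in> topspace E'. p' y = b0'}) f g + 1)
           * (ls_cat B + 1)"
proof (cases "ls_cat B")
  case (enat m)
  have p: "continuous_map E B p" and hlp: "hlp_wrt TYPE('e) E B p"
    using assms(1) hlp_wrt_prod_imp_hlp_wrt by (auto simp: hurewicz_fibration_def)
  obtain A \<Phi> where "\<And>j. j \<le> m \<Longrightarrow> openin E (A j)" "(\<Union>j\<le>m. A j) = topspace E"
    "\<And>j. j \<le> m \<Longrightarrow>
       continuous_map (subtopology E (A j)) (subtopology E {x \<in> topspace E. p x = b0}) (\<Phi> j)"
    "\<And>j. j \<le> m \<Longrightarrow> homotopic_with (\<lambda>_. True) (subtopology E (A j)) E id (\<Phi> j)"
    using hlp_fibre_deformation_cover[OF hlp p assms(3,11) enat] by blast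
  from homotopic_distance_le_deformation_cover[OF assms(5,6) this]
  show ?thesis
    unfolding enat .
next
  case infinity
  then show ?thesis
    by (simp add: plus_1_eSuc imult_infinity_right)
qed

end
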